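(* Let $N$ be a model and $A\subseteq N$, and let $N^+=(N,U_1,\dots,U_k)$ be an expansion of $N$ by finitely many unary predicates. Then $\mathrm{rtp}(N^+,A)\le\beth_{\omega+1}(\mathrm{rtp}(N,A))$.
   Context: For a structure $N$ and $A\subseteq N$, $\mathrm{rtp}(N,A)$ is the number of complete types over $A$ (in the language of $N$) realized by tuples in $(N\setminus A)^{<\omega}$. *)

theory Defs
  imports Main "HOL-Library.Equipollence"
begin

text \<open>First-order logic with equality over a signature with function symbols 'f and
relation symbols 'r (with arities), and parameters (names for elements) of type 'a.\<close>

datatype ('f, 'a) trm = Var nat | Par 'a | Fn 'f "('f, 'a) trm list"

datatype ('f, 'r, 'a) fm =
    Eq "('f, 'a) trm" "('f, 'a) trm"
  | Rl 'r "('f, 'a) trm list"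
  | Neg "('f, 'r, 'a) fm"
  | Conj "('f, 'r, 'a) fm" "('f, 'r, 'a) fm"
  | Ex nat "('f, 'r, 'a) fm"

record ('f, 'r, 'a) struc =
  sdom :: "'a set"
  fint :: "'f \<Rightarrow> 'a list \<Rightarrow> 'a"
  rint :: "'r \<Rightarrow> 'a list \<Rightarrow> bool"
  farity :: "'f \<Rightarrow> nat"
  rarity :: "'r \<Rightarrow> nat"

definition is_struc :: "('f, 'r, 'a) struc \<Rightarrow> bool" where
  "is_struc N \<longleftrightarrow> sdom N \<noteq> {} \<and>
     (\<forall>f xs. length xs = farity N f \<and> set xs \<subseteq> sdom N \<longrightarrow> fint N f xs \<in> sdom N)"

fun wft :: "('f, 'r, 'a) struc \<Rightarrow> 'a set \<Rightarrow> ('f, 'a) trm \<Rightarrow> bool" where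
  "wft N A (Var n) = True"
| "wft N A (Par a) = (a \<in> A)"
| "wft N A (Fn f ts) = (length ts = farity N f \<and> (\<forall>t\<in>set ts. wft N A t))"

fun wff :: "('f, 'r, 'a) struc \<Rightarrow> 'a set \<Rightarrow> ('f, 'r, 'a) fm \<Rightarrow> bool" where
  "wff N A (Eq s t) = (wft N A s \<and> wft N A t)"
| "wff N A (Rl r ts) = (length ts = rarity N r \<and> (\<forall>t\<in>set ts. wft N A t))"
| "wff N A (Neg p) = wff N A p"
| "wff N A (Conj p q) = (wff N A p \<and> wff N A q)"
| "wff N A (Ex n p) = wff N A p"

fun fvt :: "('f, 'a) trm \<Rightarrow> nat set" where
  "fvt (Var n) = {n}"
| "fvt (Par a) = {}"
| "fvt (Fn f ts) = (\<Union>t\<in>set ts. fvt t)"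

fun fvf :: "('f, 'r, 'a) fm \<Rightarrow> nat set" where
  "fvf (Eq s t) = fvt s \<union> fvt t"
| "fvf (Rl r ts) = (\<Union>t\<in>set ts. fvt t)"
| "fvf (Neg p) = fvf p"
| "fvf (Conj p q) = fvf p \<union> fvf q"
| "fvf (Ex n p) = fvf p - {n}"

fun evalt :: "('f, 'r, 'a) struc \<Rightarrow> (nat \<Rightarrow> 'a) \<Rightarrow> ('f, 'a) trm \<Rightarrow> 'a" where
  "evalt N e (Var n) = e n"
| "evalt N e (Par a) = a"
| "evalt N e (Fn f ts) = fint N f (map (evalt N e) ts)"

fun sat :: "('f, 'r, 'a) struc \<Rightarrow> (nat \<Rightarrow> 'a) \<Rightarrow> ('f, 'r, 'a) fm \<Rightarrow> bool" where
  "sat N e (Eq s t) = (evalt N e s = evalt N e t)"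
| "sat N e (Rl r ts) = rint N r (map (evalt N e) ts)"
| "sat N e (Neg p) = (\<not> sat N e p)"
| "sat N e (Conj p q) = (sat N e p \<and> sat N e q)"
| "sat N e (Ex n p) = (\<exists>x\<in>sdom N. sat N (e(n := x)) p)"

text \<open>The complete type over A of a finite tuple as (free variables x_0..x_{n-1}).\<close>
definition tp :: "('f, 'r, 'a) struc \<Rightarrow> 'a set \<Rightarrow> 'a list \<Rightarrow> ('f, 'r, 'a) fm set" where
  "tp N A as = {\<phi>. wff N A \<phi> \<and> fvf \<phi> \<subseteq> {..<length as} \<and> sat N (\<lambda>i. as ! i) \<phi>}"

text \<open>The set of complete types over A realized by tuples from (N - A)^{<omega};
  rtp(N,A) in the paper is the cardinality of this set.\<close>
definition rtp_set :: "('f, 'r, 'a) struc \<Rightarrow> 'a set \<Rightarrow> ('f, 'r, 'a) fm set set" where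
  "rtp_set N A = tp N A ` lists (sdom N - A)"

definition expand :: "('f, 'r, 'a) struc \<Rightarrow> ('k \<Rightarrow> 'a set) \<Rightarrow> ('f, 'r + 'k, 'a) struc" where
  "expand N U = \<lparr> sdom = sdom N, fint = fint N,
      rint = (\<lambda>s xs. case s of Inl r \<Rightarrow> rint N r xs | Inr k \<Rightarrow> hd xs \<in> U k),
      farity = farity N,
      rarity = (\<lambda>s. case s of Inl r \<Rightarrow> rarity N r | Inr k \<Rightarrow> 1) \<rparr>"

end

theory Submission
  imports Defs "HOL-Library.Countable"
begin

text \<open>Tuples from N - A are compared by an Ehrenfeucht-Fraisse game on N whose positions are
assignments of finitely many of the first w variables to elements of N - A: at depth 0 both
sides must have the same N-type over A and the same colours, and each further round moves one
variable to a new element of N - A on either side. Elements of A never need to be played, as they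
are named by parameters, and a colour atom U t with t outside A costs one round, played on the
value of t. So the type of a tuple in the expansion is determined by its game classes at width
and depth w, for all w. A class at depth n + 1 is determined by its class at depth 0 and the set
of pairs of a variable and a class at depth n, so by induction there are at most
beth_j(rtp(N,A)) classes for some finite j. Coding the classes of a tuple of length m, for all
w, as a subset of the disjoint sum of the beth_j gives the bound beth_(omega+1).\<close>

subsection \<open>Cardinal bounds\<close>

lemma image_lepoll_image:
  assumes "\<And>x y. x \<in> X \<Longrightarrow> y \<in> X \<Longrightarrow> g x = g y \<Longrightarrow> f x = f y"
  shows "f ` X \<lesssim> g ` X"
proof -
  have "inj_on (g \<circ> inv_into X f) (f ` X)"
  proof (rule inj_onI)
    fix a b assume "a \<in> f ` X" "b \<in> f ` X" "(g \<circ> inv_into X f) a = (g \<circ> inv_into X f) b"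
    then obtain x y where xy: "x \<in> X" "y \<in> X" "a = f x" "b = f y"
      "g (inv_into X f (f x)) = g (inv_into X f (f y))" by auto
    have "f (inv_into X f (f x)) = f (inv_into X f (f y))"
      by (rule assms) (use xy in \<open>auto intro: inv_into_into\<close>)
    then show "a = b" using xy by (simp add: f_inv_into_f)
  qed
  moreover have "(g \<circ> inv_into X f) ` f ` X \<subseteq> g ` X" by (auto intro: inv_into_into)
  ultimately show ?thesis unfolding lepoll_def by blast
qed

lemma Pow_lepoll_mono:
  assumes "X \<lesssim> Y"
  shows "Pow X \<lesssim> Pow Y"
proof -
  obtain f where "inj_on f X" "f ` X \<subseteq> Y" using assms unfolding lepoll_def by blast
  then have "inj_on (image f) (Pow X)" "image f ` Pow X \<subseteq> Pow Y"
    by (auto simp: inj_on_image_Pow)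
  then show ?thesis unfolding lepoll_def by blast
qed

lemma times_self_lepoll_Pow_Pow: "(X :: 'a set) \<times> X \<lesssim> Pow (Pow X)"
proof -
  have kuratowski: "a = c \<and> b = d" if "{{a}, {a, b}} = {{c}, {c, d}}" for a b c d :: 'a
    using that by (metis insert_iff empty_iff)
  have "inj_on (\<lambda>(a, b). {{a}, {a, b}}) (X \<times> X)"
    by (auto simp: inj_on_def dest: kuratowski)
  moreover have "(\<lambda>(a, b). {{a}, {a, b}}) ` (X \<times> X) \<subseteq> Pow (Pow X)" by auto
  ultimately show ?thesis unfolding lepoll_def by blast
qed

definition tower_bounded :: "(nat \<Rightarrow> 'u set) \<Rightarrow> 'b set \<Rightarrow> bool" where
  "tower_bounded S X \<longleftrightarrow> (\<exists>j. X \<lesssim> S j)"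

locale pow_tower =
  fixes S :: "nat \<Rightarrow> 'u set"
  assumes Pow_lepoll_S_Suc: "\<And>n. Pow (S n) \<lesssim> S (Suc n)"
begin

lemma S_lepoll_mono: "i \<le> j \<Longrightarrow> S i \<lesssim> S j"
proof (induction j rule: dec_induct)
  case (step n)
  then show ?case using lepoll_trans[OF lepoll_Pow_self Pow_lepoll_S_Suc] lepoll_trans by blast
qed simp

lemma tower_bounded_lepoll: "X \<lesssim> Y \<Longrightarrow> tower_bounded S Y \<Longrightarrow> tower_bounded S X"
  unfolding tower_bounded_def using lepoll_trans by blast

lemma tower_bounded_Pow: "tower_bounded S X \<Longrightarrow> tower_bounded S (Pow X)"
  unfolding tower_bounded_def using Pow_lepoll_mono Pow_lepoll_S_Suc lepoll_trans by blast

lemma tower_bounded_Times: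
  assumes "tower_bounded S X" "tower_bounded S Y"
  shows "tower_bounded S (X \<times> Y)"
proof -
  obtain i j where "X \<lesssim> S i" "Y \<lesssim> S j" using assms unfolding tower_bounded_def by blast
  then have "X \<lesssim> S (max i j)" "Y \<lesssim> S (max i j)"
    using S_lepoll_mono[of i "max i j"] S_lepoll_mono[of j "max i j"] lepoll_trans by auto
  then have "X \<times> Y \<lesssim> S (max i j) \<times> S (max i j)" by (rule times_lepoll_mono)
  also have "\<dots> \<lesssim> Pow (Pow (S (max i j)))" by (rule times_self_lepoll_Pow_Pow)
  also have "\<dots> \<lesssim> S (Suc (Suc (max i j)))"
    using Pow_lepoll_mono[OF Pow_lepoll_S_Suc] Pow_lepoll_S_Suc by (rule lepoll_trans)
  finally show ?thesis unfolding tower_bounded_def by blast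
qed

lemma tower_bounded_lessThan: "tower_bounded S {..<n::nat}"
proof (induction n)
  case 0
  then show ?case by (simp add: tower_bounded_def)
next
  case (Suc n)
  have "inj_on (\<lambda>i. {..<i}) {..<Suc n}" "(\<lambda>i. {..<i}) ` {..<Suc n} \<subseteq> Pow {..<n}"
    by (auto simp: inj_on_def)
  then have "{..<Suc n} \<lesssim> Pow {..<n}" unfolding lepoll_def by blast
  then show ?case using tower_bounded_lepoll tower_bounded_Pow Suc by blast
qed

lemma tower_bounded_finite: "finite X \<Longrightarrow> tower_bounded S X"
  using tower_bounded_lepoll[of X "{..<card X}"] tower_bounded_lessThan
    eqpoll_imp_lepoll eqpoll_iff_finite_card by blast

lemma tower_bounded_Sigma:
  assumes "finite I" "\<And>i. i \<in> I \<Longrightarrow> tower_bounded S (Y i)"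
  shows "tower_bounded S (Sigma I Y)"
proof -
  obtain j where j: "\<And>i. i \<in> I \<Longrightarrow> Y i \<lesssim> S (j i)"
    using assms(2) unfolding tower_bounded_def by metis
  define m where "m = Max (insert 0 (j ` I))"
  have "Y i \<lesssim> S m" if "i \<in> I" for i
    using j[OF that] S_lepoll_mono[of "j i" m] assms(1) that lepoll_trans
    unfolding m_def by fastforce
  then have "Sigma I Y \<lesssim> I \<times> S m" by (intro Sigma_lepoll_mono) auto
  moreover have "tower_bounded S (I \<times> S m)"
    using tower_bounded_Times tower_bounded_finite[OF assms(1)] unfolding tower_bounded_def by blast
  ultimately show ?thesis by (rule tower_bounded_lepoll)
qed

text \<open>Each index i gets its own summand, high enough in the tower for C i to embed into it.\<close>
lemma partial_maps_lepoll_Pow_Sigma: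
  fixes C :: "'i::countable \<Rightarrow> 'b set"
  assumes "\<And>i. tower_bounded S (C i)"
  shows "{f. \<forall>i b. f i = Some b \<longrightarrow> b \<in> C i} \<lesssim> Pow (SIGMA n:UNIV. S n)"
proof -
  let ?F = "{f. \<forall>i b. f i = Some b \<longrightarrow> b \<in> C i}"
  obtain j where "\<And>i. C i \<lesssim> S (j i)" using assms unfolding tower_bounded_def by metis
  define \<iota> where "\<iota> i = prod_encode (to_nat i, j i)" for i
  have "C i \<lesssim> S (\<iota> i)" for i
    using \<open>C i \<lesssim> S (j i)\<close> S_lepoll_mono[OF le_prod_encode_2] lepoll_trans unfolding \<iota>_def by blast
  then obtain G where G: "\<And>i. inj_on (G i) (C i)" "\<And>i. G i ` C i \<subseteq> S (\<iota> i)"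
    unfolding lepoll_def by metis
  define code where "code f = {(\<iota> i, G i b) | i b. f i = Some b}" for f :: "'i \<Rightarrow> 'b option"
  have code_mono: "g i = Some b"
    if "f \<in> ?F" "g \<in> ?F" "code f \<subseteq> code g" "f i = Some b" for f g i b
  proof -
    have "(\<iota> i, G i b) \<in> code g" using that(3,4) unfolding code_def by blast
    then obtain i' b' where "\<iota> i = \<iota> i'" "G i b = G i' b'" "g i' = Some b'"
      unfolding code_def by blast
    moreover have "i' = i" using \<open>\<iota> i = \<iota> i'\<close> unfolding \<iota>_def by simp
    moreover have "b \<in> C i" "b' \<in> C i" using that(1,2,4) calculation by auto
    ultimately show ?thesis using inj_onD[OF G(1)] by metis
  qed
  have "inj_on code ?F"
  proof (rule inj_onI, rule ext)
    fix f g i assume "f \<in> ?F" "g \<in> ?F" "code f = code g"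
    then show "f i = g i"
      using code_mono[of f g i] code_mono[of g f i] by (cases "f i"; cases "g i") auto
  qed
  moreover have "code f \<subseteq> (SIGMA n:UNIV. S n)" if "f \<in> ?F" for f
    using that G(2) unfolding code_def by blast
  ultimately show ?thesis unfolding lepoll_def by blast
qed

end

subsection \<open>Substitution of parameters\<close>

fun subst_trm :: "nat \<Rightarrow> 'a \<Rightarrow> ('f, 'a) trm \<Rightarrow> ('f, 'a) trm" where
  "subst_trm v a (Var n) = (if n = v then Par a else Var n)"
| "subst_trm v a (Par b) = Par b"
| "subst_trm v a (Fn f ts) = Fn f (map (subst_trm v a) ts)"

fun subst_fm :: "nat \<Rightarrow> 'a \<Rightarrow> ('f, 'r, 'a) fm \<Rightarrow> ('f, 'r, 'a) fm" where
  "subst_fm v a (Eq s t) = Eq (subst_trm v a s) (subst_trm v a t)"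
| "subst_fm v a (Rl r ts) = Rl r (map (subst_trm v a) ts)"
| "subst_fm v a (Neg p) = Neg (subst_fm v a p)"
| "subst_fm v a (Conj p q) = Conj (subst_fm v a p) (subst_fm v a q)"
| "subst_fm v a (Ex n p) = (if n = v then Ex n p else Ex n (subst_fm v a p))"

text \<open>The datatype size also counts term nodes, which substitution changes.\<close>
fun fm_size :: "('f, 'r, 'a) fm \<Rightarrow> nat" where
  "fm_size (Eq s t) = 1"
| "fm_size (Rl r ts) = 1"
| "fm_size (Neg p) = Suc (fm_size p)"
| "fm_size (Conj p q) = Suc (fm_size p + fm_size q)"
| "fm_size (Ex n p) = Suc (fm_size p)"

fun bv :: "('f, 'r, 'a) fm \<Rightarrow> nat set" where
  "bv (Eq s t) = {}"
| "bv (Rl r ts) = {}"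
| "bv (Neg p) = bv p"
| "bv (Conj p q) = bv p \<union> bv q"
| "bv (Ex n p) = insert n (bv p)"

text \<open>The number of game rounds needed to decide a formula of the expanded language.\<close>
fun rank :: "('f, 'r + 'k, 'a) fm \<Rightarrow> nat" where
  "rank (Eq s t) = 0"
| "rank (Rl r ts) = (case r of Inl _ \<Rightarrow> 0 | Inr _ \<Rightarrow> 1)"
| "rank (Neg p) = rank p"
| "rank (Conj p q) = max (rank p) (rank q)"
| "rank (Ex n p) = Suc (rank p)"

lemma evalt_subst_trm: "evalt N e (subst_trm v a t) = evalt N (e(v := a)) t"
  by (induction t) (auto cong: map_cong)

lemma sat_subst_fm: "sat N e (subst_fm v a p) = sat N (e(v := a)) p"
  by (induction p arbitrary: e) (auto simp: evalt_subst_trm comp_def fun_upd_twist)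

lemma wft_subst_trm: "wft N A t \<Longrightarrow> a \<in> A \<Longrightarrow> wft N A (subst_trm v a t)"
  by (induction t) auto

lemma wff_subst_fm: "wff N A p \<Longrightarrow> a \<in> A \<Longrightarrow> wff N A (subst_fm v a p)"
  by (induction p) (auto simp: wft_subst_trm)

lemma fvt_subst_trm: "fvt (subst_trm v a t) = fvt t - {v}"
  by (induction t) auto

lemma fvf_subst_fm: "fvf (subst_fm v a p) = fvf p - {v}"
  by (induction p) (auto simp: fvt_subst_trm)

lemma fm_size_subst_fm: "fm_size (subst_fm v a p) = fm_size p"
  by (induction p) auto

lemma rank_subst_fm: "rank (subst_fm v a p) = rank p"
  by (induction p) auto

lemma bv_subst_fm_subset: "bv (subst_fm v a p) \<subseteq> bv p"
  by (induction p) auto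

lemma finite_bv: "finite (bv p)"
  by (induction p) auto

lemma evalt_cong: "\<forall>x\<in>fvt t. e x = e' x \<Longrightarrow> evalt N e t = evalt N e' t"
  by (induction t) (auto cong: map_cong)

lemma sat_cong: "\<forall>x\<in>fvf p. e x = e' x \<Longrightarrow> sat N e p = sat N e' p"
proof (induction p arbitrary: e e')
  case (Eq s t)
  then show ?case using evalt_cong[of s e e' N] evalt_cong[of t e e' N] by auto
next
  case (Rl r ts)
  have "map (evalt N e) ts = map (evalt N e') ts"
    using Rl by (auto intro!: evalt_cong)
  then show ?case by (metis sat.simps(2))
next
  case (Conj p q)
  then show ?case by (metis Un_iff fvf.simps(4) sat.simps(4))
next
  case (Ex n p)
  have "sat N (e(n := x)) p = sat N (e'(n := x)) p" for x
    using Ex.prems by (intro Ex.IH) auto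
  then show ?case by simp
qed simp

lemma evalt_in_sdom:
  assumes "is_struc N" "A \<subseteq> sdom N" "wft N A t" "\<And>x. x \<in> fvt t \<Longrightarrow> e x \<in> sdom N"
  shows "evalt N e t \<in> sdom N"
  using assms(3,4)
proof (induction t)
  case (Fn f ts)
  then have "set (map (evalt N e) ts) \<subseteq> sdom N" by auto
  then show ?case using assms(1) Fn.prems unfolding is_struc_def by auto
qed (use assms(2) in auto)

lemma expand_simps [simp]:
  "sdom (expand N U) = sdom N" "fint (expand N U) = fint N" "farity (expand N U) = farity N"
  "rint (expand N U) (Inl r) = rint N r" "rint (expand N U) (Inr k) xs = (hd xs \<in> U k)"
  "rarity (expand N U) (Inl r) = rarity N r" "rarity (expand N U) (Inr k) = 1"
  by (auto simp: expand_def)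

lemma evalt_expand [simp]: "evalt (expand N U) = evalt N"
proof (intro ext)
  show "evalt (expand N U) e t = evalt N e t" for e t
    by (induction t) (auto cong: map_cong)
qed

lemma wft_expand [simp]: "wft (expand N U) A t = wft N A t"
  by (induction t) auto

subsection \<open>The game\<close>

definition tp_on :: "('f, 'r, 'a) struc \<Rightarrow> 'a set \<Rightarrow> nat set \<Rightarrow> (nat \<Rightarrow> 'a) \<Rightarrow>
    ('f, 'r, 'a) fm set" where
  "tp_on N A V e = {\<phi>. wff N A \<phi> \<and> fvf \<phi> \<subseteq> V \<and> sat N e \<phi>}"

definition base_equiv :: "('f, 'r, 'a) struc \<Rightarrow> 'a set \<Rightarrow> ('k \<Rightarrow> 'a set) \<Rightarrow> nat set \<Rightarrow>
    (nat \<Rightarrow> 'a) \<Rightarrow> (nat \<Rightarrow> 'a) \<Rightarrow> bool" where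
  "base_equiv N A U V e e' \<longleftrightarrow>
     tp_on N A V e = tp_on N A V e' \<and> (\<forall>k. \<forall>v\<in>V. e v \<in> U k \<longleftrightarrow> e' v \<in> U k)"

fun game_equiv :: "('f, 'r, 'a) struc \<Rightarrow> 'a set \<Rightarrow> ('k \<Rightarrow> 'a set) \<Rightarrow> nat \<Rightarrow> nat \<Rightarrow> nat set \<Rightarrow>
    (nat \<Rightarrow> 'a) \<Rightarrow> (nat \<Rightarrow> 'a) \<Rightarrow> bool" where
  "game_equiv N A U w 0 V e e' = base_equiv N A U V e e'"
| "game_equiv N A U w (Suc n) V e e' \<longleftrightarrow> base_equiv N A U V e e' \<and>
     (\<forall>v<w. \<forall>x\<in>sdom N - A. \<exists>x'\<in>sdom N - A.
        game_equiv N A U w n (insert v V) (e(v := x)) (e'(v := x'))) \<and>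
     (\<forall>v<w. \<forall>x'\<in>sdom N - A. \<exists>x\<in>sdom N - A.
        game_equiv N A U w n (insert v V) (e(v := x)) (e'(v := x')))"

lemma game_equiv_base: "game_equiv N A U w n V e e' \<Longrightarrow> base_equiv N A U V e e'"
  by (cases n) auto

lemma game_equiv_Suc_forth:
  "game_equiv N A U w (Suc n) V e e' \<Longrightarrow> v < w \<Longrightarrow> x \<in> sdom N - A \<Longrightarrow>
    \<exists>x'\<in>sdom N - A. game_equiv N A U w n (insert v V) (e(v := x)) (e'(v := x'))"
  by simp

lemma game_equiv_Suc_back:
  "game_equiv N A U w (Suc n) V e e' \<Longrightarrow> v < w \<Longrightarrow> x' \<in> sdom N - A \<Longrightarrow>
    \<exists>x\<in>sdom N - A. game_equiv N A U w n (insert v V) (e(v := x)) (e'(v := x'))"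
  by simp

lemma game_equiv_refl: "game_equiv N A U w n V e e"
  by (induction n arbitrary: V e) (auto simp: base_equiv_def)

lemma game_equiv_sym: "game_equiv N A U w n V e e' \<Longrightarrow> game_equiv N A U w n V e' e"
proof (induction n arbitrary: V e e')
  case 0
  then show ?case by (auto simp: base_equiv_def)
next
  case (Suc n)
  then show ?case by (simp add: base_equiv_def) blast
qed

lemma game_equiv_trans:
  "game_equiv N A U w n V e1 e2 \<Longrightarrow> game_equiv N A U w n V e2 e3 \<Longrightarrow> game_equiv N A U w n V e1 e3"
proof (induction n arbitrary: V e1 e2 e3)
  case 0
  then show ?case by (auto simp: base_equiv_def)
next
  case (Suc n)
  let ?D = "sdom N - A"
  have "\<exists>z\<in>?D. game_equiv N A U w n (insert v V) (e1(v := x)) (e3(v := z))"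
    if move: "v < w" "x \<in> ?D" for v x
  proof -
    obtain y where "y \<in> ?D" "game_equiv N A U w n (insert v V) (e1(v := x)) (e2(v := y))"
      using game_equiv_Suc_forth[OF Suc.prems(1) move] by blast
    moreover obtain z where "z \<in> ?D" "game_equiv N A U w n (insert v V) (e2(v := y)) (e3(v := z))"
      using game_equiv_Suc_forth[OF Suc.prems(2) move(1) calculation(1)] by blast
    ultimately show ?thesis using Suc.IH by blast
  qed
  moreover have "\<exists>x\<in>?D. game_equiv N A U w n (insert v V) (e1(v := x)) (e3(v := z))"
    if move: "v < w" "z \<in> ?D" for v z
  proof -
    obtain y where "y \<in> ?D" "game_equiv N A U w n (insert v V) (e2(v := y)) (e3(v := z))"
      using game_equiv_Suc_back[OF Suc.prems(2) move] by blast
    moreover obtain x where "x \<in> ?D" "game_equiv N A U w n (insert v V) (e1(v := x)) (e2(v := y))"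
      using game_equiv_Suc_back[OF Suc.prems(1) move(1) calculation(1)] by blast
    ultimately show ?thesis using Suc.IH by blast
  qed
  moreover have "base_equiv N A U V e1 e3" using Suc.prems by (auto simp: base_equiv_def)
  ultimately show ?case by simp
qed

lemma base_equiv_sat_iff:
  "base_equiv N A U V e e' \<Longrightarrow> wff N A \<phi> \<Longrightarrow> fvf \<phi> \<subseteq> V \<Longrightarrow> sat N e \<phi> \<longleftrightarrow> sat N e' \<phi>"
  unfolding base_equiv_def tp_on_def by blast

lemma game_equiv_colour_atom:
  assumes "is_struc N" "A \<subseteq> sdom N" "game_equiv N A U w (Suc n) V e e'"
    and "u < w" "u \<notin> V" "wft N A t" "fvt t \<subseteq> V" "\<forall>x\<in>V. e x \<in> sdom N"
  shows "evalt N e t \<in> U k \<longleftrightarrow> evalt N e' t \<in> U k"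
proof (cases "evalt N e t \<in> A")
  case True
  have "base_equiv N A U V e e'" using assms(3) by (rule game_equiv_base)
  then have "sat N e (Eq t (Par (evalt N e t))) \<longleftrightarrow> sat N e' (Eq t (Par (evalt N e t)))"
    using assms(6,7) True by (intro base_equiv_sat_iff) auto
  then show ?thesis by simp
next
  case False
  define y where "y = evalt N e t"
  have "y \<in> sdom N - A"
    using evalt_in_sdom[OF assms(1,2,6)] assms(7,8) False unfolding y_def by blast
  then obtain y' where "game_equiv N A U w n (insert u V) (e(u := y)) (e'(u := y'))"
    using game_equiv_Suc_forth[OF assms(3,4)] by blast
  then have base: "base_equiv N A U (insert u V) (e(u := y)) (e'(u := y'))"
    by (rule game_equiv_base)
  have "u \<notin> fvt t" using assms(5,7) by auto
  then have "evalt N (e(u := y)) t = y" "evalt N (e'(u := y')) t = evalt N e' t"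
    unfolding y_def by (auto intro: evalt_cong)
  moreover have "sat N (e(u := y)) (Eq (Var u) t) \<longleftrightarrow> sat N (e'(u := y')) (Eq (Var u) t)"
    using base assms(6,7) by (intro base_equiv_sat_iff) auto
  moreover have "y \<in> U k \<longleftrightarrow> y' \<in> U k"
    using base unfolding base_equiv_def by (metis fun_upd_same insertI1)
  ultimately show ?thesis unfolding y_def by simp
qed

lemma bex_iff_back_and_forth:
  assumes "A \<subseteq> D"
    and "\<forall>x\<in>D - A. \<exists>x'\<in>D - A. R x x'" "\<forall>x'\<in>D - A. \<exists>x\<in>D - A. R x x'"
    and "\<And>x x'. x \<in> D - A \<Longrightarrow> x' \<in> D - A \<Longrightarrow> R x x' \<Longrightarrow> P x \<longleftrightarrow> Q x'"
    and "\<And>a. a \<in> A \<Longrightarrow> P a \<longleftrightarrow> Q a"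
  shows "(\<exists>x\<in>D. P x) \<longleftrightarrow> (\<exists>x\<in>D. Q x)"
  using assms by (metis Diff_iff)

text \<open>The fresh variable needed for a colour atom comes from the bound on card V + rank.\<close>
lemma game_equiv_sat_expand:
  assumes "is_struc N" "A \<subseteq> sdom N"
  shows "wff (expand N U) A \<phi> \<Longrightarrow> fvf \<phi> \<subseteq> V \<Longrightarrow> finite V \<Longrightarrow> bv \<phi> \<subseteq> {..<w} \<Longrightarrow>
    card V + rank \<phi> < w \<Longrightarrow> rank \<phi> \<le> n \<Longrightarrow> \<forall>x\<in>V. e x \<in> sdom N \<Longrightarrow>
    game_equiv N A U w n V e e' \<Longrightarrow> sat (expand N U) e \<phi> \<longleftrightarrow> sat (expand N U) e' \<phi>"
proof (induction "fm_size \<phi>" arbitrary: \<phi> V n e e' rule: less_induct)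
  case less
  note prems = less.prems
  have base: "base_equiv N A U V e e'" using prems(8) by (rule game_equiv_base)
  show ?case
  proof (cases \<phi>)
    case (Eq s t)
    then show ?thesis using base_equiv_sat_iff[OF base, of "Eq s t"] prems(1,2) by simp
  next
    case (Rl r ts)
    show ?thesis
    proof (cases r)
      case (Inl r')
      then show ?thesis using base_equiv_sat_iff[OF base, of "Rl r' ts"] prems(1,2) Rl by simp
    next
      case (Inr k)
      obtain t where ts: "ts = [t]" using prems(1) Rl Inr by (auto simp: length_Suc_conv)
      obtain m where n: "n = Suc m" using prems(6) Rl Inr by (cases n) auto
      have "\<not> {..<w} \<subseteq> V"
        using prems(3,5) card_mono[of V "{..<w}"] Rl Inr by auto
      then obtain u where "u < w" "u \<notin> V" by auto
      then show ?thesis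
        using game_equiv_colour_atom[OF assms, of U w m V e e' u t k] prems(1,2,7,8) Rl Inr ts n
        by simp
    qed
  next
    case (Neg p)
    then show ?thesis using less.hyps[of p V n e e'] prems by simp
  next
    case (Conj p q)
    then show ?thesis using less.hyps[of p V n e e'] less.hyps[of q V n e e'] prems by auto
  next
    case (Ex v p)
    obtain m where n: "n = Suc m" using prems(6) Ex by (cases n) auto
    have "card (insert v V) \<le> Suc (card V)" using prems(3) by (simp add: card_insert_if)
    then have moves: "sat (expand N U) (e(v := x)) p \<longleftrightarrow> sat (expand N U) (e'(v := x')) p"
      if "x \<in> sdom N" "game_equiv N A U w m (insert v V) (e(v := x)) (e'(v := x'))"
      for x x'
      by (intro less.hyps[of p "insert v V" m]) (use prems Ex that n in auto)
    have params: "sat (expand N U) e (subst_fm v a p) \<longleftrightarrow> sat (expand N U) e' (subst_fm v a p)"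
      if "a \<in> A" for a
      by (intro less.hyps[of "subst_fm v a p" V n])
        (use prems Ex that in \<open>auto simp: fm_size_subst_fm rank_subst_fm fvf_subst_fm wff_subst_fm
          dest: bv_subst_fm_subset[THEN subsetD]\<close>)
    have "(\<exists>x\<in>sdom N. sat (expand N U) (e(v := x)) p) \<longleftrightarrow>
      (\<exists>x\<in>sdom N. sat (expand N U) (e'(v := x)) p)"
      using assms(2) prems(4,8) Ex n moves params
      by (intro bex_iff_back_and_forth[where A = A and R = "\<lambda>x x'.
          game_equiv N A U w m (insert v V) (e(v := x)) (e'(v := x'))"]) (auto simp: sat_subst_fm)
    then show ?thesis using Ex by simp
  qed
qed

lemma tp_expand_subset_if_game_equiv:
  assumes "is_struc N" "A \<subseteq> sdom N"
    and "b \<in> lists (sdom N - A)" "length b = m" "length b' = m"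
    and "\<forall>w. game_equiv N A U w w {..<m} (nth b) (nth b')"
  shows "tp (expand N U) A b \<subseteq> tp (expand N U) A b'"
proof
  fix \<phi> assume "\<phi> \<in> tp (expand N U) A b"
  then have \<phi>: "wff (expand N U) A \<phi>" "fvf \<phi> \<subseteq> {..<m}" "sat (expand N U) (nth b) \<phi>"
    using assms(4) by (auto simp: tp_def)
  define w where "w = Suc (m + rank \<phi> + Max (insert 0 (bv \<phi>)))"
  have "x \<le> Max (insert 0 (bv \<phi>))" if "x \<in> bv \<phi>" for x
    using that finite_bv[of \<phi>] by simp
  then have bv: "bv \<phi> \<subseteq> {..<w}" unfolding w_def by fastforce
  have dom: "\<forall>x\<in>{..<m}. b ! x \<in> sdom N"
    using assms(3,4) nth_mem[of _ b] by auto
  have w: "card {..<m} + rank \<phi> < w" "rank \<phi> \<le> w"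
    unfolding w_def by auto
  have "game_equiv N A U w w {..<m} (nth b) (nth b')" using assms(6) by blast
  then have "sat (expand N U) (nth b) \<phi> \<longleftrightarrow> sat (expand N U) (nth b') \<phi>"
    by (rule game_equiv_sat_expand[OF assms(1,2) \<phi>(1,2) finite_lessThan bv w dom])
  then show "\<phi> \<in> tp (expand N U) A b'" using \<phi> assms(4,5) by (auto simp: tp_def)
qed

subsection \<open>Counting game classes\<close>

definition game_class :: "('f, 'r, 'a) struc \<Rightarrow> 'a set \<Rightarrow> ('k \<Rightarrow> 'a set) \<Rightarrow> nat \<Rightarrow> nat \<Rightarrow>
    nat set \<Rightarrow> (nat \<Rightarrow> 'a) \<Rightarrow> (nat \<Rightarrow> 'a) set" where
  "game_class N A U w n V e = {e'. game_equiv N A U w n V e e'}"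

lemma game_class_eq_iff:
  "game_class N A U w n V e = game_class N A U w n V e' \<longleftrightarrow> game_equiv N A U w n V e e'"
proof
  assume "game_class N A U w n V e = game_class N A U w n V e'"
  then show "game_equiv N A U w n V e e'"
    unfolding game_class_def using game_equiv_refl by blast
next
  assume "game_equiv N A U w n V e e'"
  then show "game_class N A U w n V e = game_class N A U w n V e'"
    unfolding game_class_def using game_equiv_sym game_equiv_trans by blast
qed

definition game_classes :: "('f, 'r, 'a) struc \<Rightarrow> 'a set \<Rightarrow> ('k \<Rightarrow> 'a set) \<Rightarrow> nat \<Rightarrow> nat \<Rightarrow>
    nat set \<Rightarrow> (nat \<Rightarrow> 'a) set set" where
  "game_classes N A U w n V = game_class N A U w n V ` {e. \<forall>x\<in>V. e x \<in> sdom N - A}"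

definition successor_classes :: "('f, 'r, 'a) struc \<Rightarrow> 'a set \<Rightarrow> ('k \<Rightarrow> 'a set) \<Rightarrow> nat \<Rightarrow> nat \<Rightarrow>
    nat set \<Rightarrow> (nat \<Rightarrow> 'a) \<Rightarrow> (nat \<times> (nat \<Rightarrow> 'a) set) set" where
  "successor_classes N A U w n V e =
     {(v, game_class N A U w n (insert v V) (e(v := x))) | v x. v < w \<and> x \<in> sdom N - A}"

lemma game_equiv_SucI:
  assumes "base_equiv N A U V e e'"
    and "successor_classes N A U w n V e = successor_classes N A U w n V e'"
  shows "game_equiv N A U w (Suc n) V e e'"
proof -
  have forth: "\<exists>x'\<in>sdom N - A. game_equiv N A U w n (insert v V) (e(v := x)) (e'(v := x'))"
    if "v < w" "x \<in> sdom N - A" for v x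
  proof -
    have "(v, game_class N A U w n (insert v V) (e(v := x))) \<in> successor_classes N A U w n V e'"
      using assms(2) that unfolding successor_classes_def by blast
    then show ?thesis unfolding successor_classes_def by (auto simp: game_class_eq_iff)
  qed
  have backward: "\<exists>x\<in>sdom N - A. game_equiv N A U w n (insert v V) (e(v := x)) (e'(v := x'))"
    if "v < w" "x' \<in> sdom N - A" for v x'
  proof -
    have "(v, game_class N A U w n (insert v V) (e'(v := x'))) \<in> successor_classes N A U w n V e"
      using assms(2) that unfolding successor_classes_def by blast
    then show ?thesis
      unfolding successor_classes_def by (auto simp: game_class_eq_iff dest: game_equiv_sym)
  qed
  show ?thesis using assms(1) forth backward by simp
qed

lemma ex_list_nth_eq_on:
  assumes "finite V" "\<forall>x\<in>V. e x \<in> D"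
  shows "\<exists>b\<in>lists D. \<forall>i\<in>V. i < length b \<and> b ! i = e i"
proof (cases "V = {}")
  case False
  then obtain v0 where "v0 \<in> V" by auto
  define b where "b = map (\<lambda>i. if i \<in> V then e i else e v0) [0..<Suc (Max V)]"
  have "b \<in> lists D" using assms \<open>v0 \<in> V\<close> by (auto simp: b_def)
  moreover have "\<forall>i\<in>V. i < length b \<and> b ! i = e i"
    using assms(1) by (auto simp: b_def less_Suc_eq_le simp del: upt_Suc)
  ultimately show ?thesis by blast
qed auto

lemma tp_on_image_lepoll_rtp_set:
  assumes "finite V"
  shows "tp_on N A V ` {e. \<forall>x\<in>V. e x \<in> sdom N - A} \<lesssim> rtp_set N A"
proof (rule subset_image_lepoll)
  show "tp_on N A V ` {e. \<forall>x\<in>V. e x \<in> sdom N - A} \<subseteq> (\<lambda>\<tau>. {\<phi>\<in>\<tau>. fvf \<phi> \<subseteq> V}) ` rtp_set N A"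
  proof
    fix T assume "T \<in> tp_on N A V ` {e. \<forall>x\<in>V. e x \<in> sdom N - A}"
    then obtain e where e: "\<forall>x\<in>V. e x \<in> sdom N - A" "T = tp_on N A V e" by auto
    obtain b where b: "b \<in> lists (sdom N - A)" "\<forall>i\<in>V. i < length b \<and> b ! i = e i"
      using ex_list_nth_eq_on[OF assms e(1)] by blast
    have "sat N e \<phi> = sat N (nth b) \<phi>" if "fvf \<phi> \<subseteq> V" for \<phi>
      using that b(2) by (intro sat_cong) auto
    moreover have "fvf \<phi> \<subseteq> V \<Longrightarrow> fvf \<phi> \<subseteq> {..<length b}" for \<phi> using b(2) by auto
    ultimately have "T = {\<phi>\<in>tp N A b. fvf \<phi> \<subseteq> V}" unfolding e(2) tp_on_def tp_def by auto
    then show "T \<in> (\<lambda>\<tau>. {\<phi>\<in>\<tau>. fvf \<phi> \<subseteq> V}) ` rtp_set N A"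
      using b(1) unfolding rtp_set_def by blast
  qed
qed

context pow_tower
begin

lemma game_classes_0_tower_bounded:
  fixes U :: "'k::finite \<Rightarrow> 'a set"
  assumes "finite V" "tower_bounded S (rtp_set N A)"
  shows "tower_bounded S (game_classes N A U w 0 V)"
proof -
  let ?E = "{e. \<forall>x\<in>V. e x \<in> sdom N - A}"
  let ?inv = "\<lambda>e. (tp_on N A V e, {(k, v). v \<in> V \<and> e v \<in> U k})"
  have "game_classes N A U w 0 V \<lesssim> ?inv ` ?E"
    unfolding game_classes_def
  proof (rule image_lepoll_image)
    fix e e' assume "?inv e = ?inv e'"
    then have "base_equiv N A U V e e'" unfolding base_equiv_def by (auto simp: set_eq_iff)
    then show "game_class N A U w 0 V e = game_class N A U w 0 V e'"
      by (simp add: game_class_eq_iff)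
  qed
  moreover have "?inv ` ?E \<subseteq> tp_on N A V ` ?E \<times> Pow (UNIV \<times> V)" by auto
  moreover have "finite (Pow ((UNIV :: 'k set) \<times> V))" using assms(1) by simp
  then have "tower_bounded S (tp_on N A V ` ?E \<times> Pow ((UNIV :: 'k set) \<times> V))"
    using tower_bounded_lepoll[OF tp_on_image_lepoll_rtp_set[OF assms(1)] assms(2)]
      tower_bounded_finite tower_bounded_Times by blast
  ultimately show ?thesis using tower_bounded_lepoll subset_imp_lepoll lepoll_trans by meson
qed

lemma game_classes_tower_bounded:
  fixes U :: "'k::finite \<Rightarrow> 'a set"
  assumes "finite V" "tower_bounded S (rtp_set N A)"
  shows "tower_bounded S (game_classes N A U w n V)"
  using assms(1)
proof (induction n arbitrary: V)
  case 0
  then show ?case using game_classes_0_tower_bounded assms(2) by blast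
next
  case (Suc n)
  let ?E = "{e. \<forall>x\<in>V. e x \<in> sdom N - A}"
  let ?succ = "SIGMA v:{..<w}. game_classes N A U w n (insert v V)"
  let ?inv = "\<lambda>e. (game_class N A U w 0 V e, successor_classes N A U w n V e)"
  have "tower_bounded S ?succ"
    using Suc by (intro tower_bounded_Sigma) auto
  then have bounded: "tower_bounded S (game_classes N A U w 0 V \<times> Pow ?succ)"
    using game_classes_0_tower_bounded[OF Suc.prems assms(2)] tower_bounded_Pow
    by (intro tower_bounded_Times)
  have "game_classes N A U w (Suc n) V \<lesssim> ?inv ` ?E"
    unfolding game_classes_def
  proof (rule image_lepoll_image)
    fix e e' assume "?inv e = ?inv e'"
    then have "game_equiv N A U w (Suc n) V e e'"
      by (intro game_equiv_SucI) (simp_all add: game_class_eq_iff)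
    then show "game_class N A U w (Suc n) V e = game_class N A U w (Suc n) V e'"
      by (simp add: game_class_eq_iff)
  qed
  moreover have "?inv ` ?E \<subseteq> game_classes N A U w 0 V \<times> Pow ?succ"
    unfolding game_classes_def successor_classes_def by auto
  ultimately show ?case using bounded tower_bounded_lepoll subset_imp_lepoll lepoll_trans by meson
qed

end

definition game_profile :: "('f, 'r, 'a) struc \<Rightarrow> 'a set \<Rightarrow> ('k \<Rightarrow> 'a set) \<Rightarrow> 'a list \<Rightarrow>
    nat \<times> nat \<Rightarrow> (nat \<Rightarrow> 'a) set option" where
  "game_profile N A U b = (\<lambda>(m, w).
     if m = length b then Some (game_class N A U w w {..<m} (nth b)) else None)"

lemma game_profile_in_game_classes:
  assumes "b \<in> lists (sdom N - A)" "game_profile N A U b (m, w) = Some c"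
  shows "c \<in> game_classes N A U w w {..<m}"
proof -
  have "nth b \<in> {e. \<forall>x\<in>{..<length b}. e x \<in> sdom N - A}"
    using assms(1) by (auto dest!: nth_mem)
  then show ?thesis
    using assms(2) unfolding game_profile_def game_classes_def by (auto split: if_splits)
qed

lemma tp_expand_eq_if_game_profile_eq:
  assumes "is_struc N" "A \<subseteq> sdom N" "b \<in> lists (sdom N - A)" "b' \<in> lists (sdom N - A)"
    and "game_profile N A U b = game_profile N A U b'"
  shows "tp (expand N U) A b = tp (expand N U) A b'"
proof -
  have "game_profile N A U b' (length b, 0) \<noteq> None"
    using assms(5)[symmetric] by (simp add: game_profile_def)
  then have len: "length b' = length b" by (simp add: game_profile_def split: if_splits)
  have equiv: "game_equiv N A U w w {..<length b} (nth b) (nth b')" for w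
    using fun_cong[OF assms(5), of "(length b, w)"] len
    unfolding game_profile_def by (simp add: game_class_eq_iff)
  show ?thesis
  proof
    show "tp (expand N U) A b \<subseteq> tp (expand N U) A b'"
      using tp_expand_subset_if_game_equiv[OF assms(1-3) refl len] equiv by blast
    show "tp (expand N U) A b' \<subseteq> tp (expand N U) A b"
      using tp_expand_subset_if_game_equiv[OF assms(1,2,4) len refl] equiv game_equiv_sym
      by blast
  qed
qed

theorem lemma4:
  fixes N :: "('f, 'r, 'a) struc" and A :: "'a set"
    and U :: "'k::finite \<Rightarrow> 'a set"
    and S :: "nat \<Rightarrow> 'u set"
  assumes "is_struc N" and "A \<subseteq> sdom N" and "\<forall>k. U k \<subseteq> sdom N"
    and "S 0 \<approx> rtp_set N A"
    and "\<forall>n. S (Suc n) \<approx> Pow (S n)"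
  shows "rtp_set (expand N U) A \<lesssim> Pow (SIGMA n:UNIV. S n)"
proof -
  let ?D = "sdom N - A"
  let ?C = "\<lambda>(m, w). game_classes N A U w w {..<m}"
  interpret pow_tower S
    using assms(5) eqpoll_sym eqpoll_imp_lepoll by unfold_locales blast
  have "rtp_set N A \<lesssim> S 0" using assms(4) eqpoll_sym eqpoll_imp_lepoll by blast
  then have "tower_bounded S (rtp_set N A)" unfolding tower_bounded_def by blast
  then have bounded: "tower_bounded S (?C i)" for i
    using game_classes_tower_bounded[OF finite_lessThan] by (cases i) simp
  have "rtp_set (expand N U) A = tp (expand N U) A ` lists ?D" by (simp add: rtp_set_def)
  also have "\<dots> \<lesssim> game_profile N A U ` lists ?D"
    using tp_expand_eq_if_game_profile_eq[OF assms(1,2)] by (rule image_lepoll_image)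
  also have "\<dots> \<lesssim> {f. \<forall>i c. f i = Some c \<longrightarrow> c \<in> ?C i}"
    using game_profile_in_game_classes by (intro subset_imp_lepoll) fastforce
  also have "\<dots> \<lesssim> Pow (SIGMA n:UNIV. S n)"
    using bounded by (rule partial_maps_lepoll_Pow_Sigma)
  finally show ?thesis .
qed

end
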